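(* Let $H\in(\tfrac12,1)$, $\beta\in(1-2H,1]$, and let $A$, $W^H$, $\Phi$ be as in the context. Then the stochastic convolution $\mathcal O_t:=\int_0^tE(t-s)\Phi\,\mathrm dW^H(s)$, $t\in[0,T]$, is well defined in $L^2(\Omega;V)$ and there is a constant $c_H$ depending only on $H$ (and, for the second estimate, on $A$ only through the stated semigroup properties) such that $$\|\mathcal O_t\|_{L^2(\Omega;V_{2H+\beta-1})}\le c_H\|A^{\frac{\beta-1}{2}}\Phi\|_{\mathcal L_2}\quad\forall t\in[0,T],$$ and for all $0\le s<t\le T$ and all $\delta\in[0,2H+\beta-1]$, $$\|\mathcal O_t-\mathcal O_s\|_{L^2(\Omega;V_\delta)}\le c_H\|A^{\frac{\beta-1}{2}}\Phi\|_{\mathcal L_2}(t-s)^{\frac{2H+\beta-1-\delta}{2}} .$$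
   Context: $(V,\langle\cdot,\cdot\rangle,\|\cdot\|)$ is a real separable Hilbert space; $\mathcal L_2$ denotes the Hilbert–Schmidt operators on $V$. $A$ is a linear, densely defined, positive self-adjoint unbounded operator on $V$ with compact inverse, eigenpairs $(\lambda_i,e_i)$ with $0<\lambda_1\le\lambda_2\le\dots\to\infty$, semigroup $E(t)=e^{-tA}$, and $V_\gamma=\mathrm{dom}(A^{\gamma/2})$ with norm $\|A^{\gamma/2}\cdot\|$. $W^H(t)=\sum_n w_n^H(t)e_n$ is a cylindrical fBm with independent scalar standard fBms $w_n^H$ of Hurst index $H\in(\tfrac12,1)$. $\Phi$ is a deterministic linear operator on $V$ with $\|A^{\frac{\beta-1}{2}}\Phi\|_{\mathcal L_2}<\infty$. With $\phi(y)=H(2H-1)|y|^{2H-2}$, the stochastic integral against $W^H$ of a deterministic operator-valued integrand $\Psi$ is defined as $\sum_n\int\Psi(s)e_n\,\mathrm dw^H_n(s)$ and satisfies $\mathbb E\|\int_0^T\Psi\,\mathrm dW^H\|^2=\int_0^T\int_0^T\langle\Psi(u),\Psi(v)\rangle_{\mathcal L_2}\phi(u-v)\,\mathrm du\,\mathrm dv$. *)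

theory Defs
  imports "HOL-Analysis.Analysis"
begin

text \<open>The operator A is given through its orthonormal eigenbasis
  e and eigenvalues lam (A e_i = lam_i e_i).\<close>

definition orthonormal_basis :: "(nat \<Rightarrow> 'a::real_inner) \<Rightarrow> bool" where
  "orthonormal_basis e \<longleftrightarrow>
     (\<forall>i j. e i \<bullet> e j = (if i = j then 1 else 0)) \<and>
     (\<forall>x. (\<forall>i. x \<bullet> e i = 0) \<longrightarrow> x = 0)"

text \<open>Spectral data of a positive self-adjoint operator with compact inverse:
  0 < lam_1 <= lam_2 <= ... tending to infinity.\<close>
definition admissible_spectrum :: "(nat \<Rightarrow> real) \<Rightarrow> bool" where
  "admissible_spectrum lam \<longleftrightarrow> 0 < lam 0 \<and> mono lam \<and> filterlim lam at_top sequentially"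

text \<open>A^a x = sum_i lam_i^a <x,e_i> e_i (used for a <= 0, where it is bounded).\<close>
definition frac_pow :: "(nat \<Rightarrow> 'a::real_inner) \<Rightarrow> (nat \<Rightarrow> real) \<Rightarrow> real \<Rightarrow> 'a \<Rightarrow> 'a" where
  "frac_pow e lam a x = (\<Sum>i. (lam i powr a * (x \<bullet> e i)) *\<^sub>R e i)"

definition sgrp :: "(nat \<Rightarrow> 'a::real_inner) \<Rightarrow> (nat \<Rightarrow> real) \<Rightarrow> real \<Rightarrow> 'a \<Rightarrow> 'a" where
  "sgrp e lam t x = (\<Sum>i. (exp (- (t * lam i)) * (x \<bullet> e i)) *\<^sub>R e i)"

definition hs_norm2 :: "(nat \<Rightarrow> 'a::real_inner) \<Rightarrow> ('a \<Rightarrow> 'a) \<Rightarrow> ennreal" where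
  "hs_norm2 e K = (\<Sum>n. ennreal ((norm (K (e n)))\<^sup>2))"

definition fbm_kernel :: "real \<Rightarrow> real \<Rightarrow> real" where
  "fbm_kernel H y = H * (2 * H - 1) * \<bar>y\<bar> powr (2 * H - 2)"

text \<open>Second moment of the scalar Wiener integral of a deterministic f against a
  standard fBm w^H over [a,b]:  E|int_a^b f dw^H|^2 = int int f(u) f(v) phi(u-v) du dv.\<close>
definition wiener_integrable :: "real \<Rightarrow> (real \<Rightarrow> real) \<Rightarrow> real \<Rightarrow> real \<Rightarrow> bool" where
  "wiener_integrable H f a b \<longleftrightarrow>
     set_integrable lborel ({a..b} \<times> {a..b})
       (\<lambda>z::real\<times>real. f (fst z) * f (snd z) * fbm_kernel H (fst z - snd z))"

definition wiener_moment2 :: "real \<Rightarrow> (real \<Rightarrow> real) \<Rightarrow> real \<Rightarrow> real \<Rightarrow> real" where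
  "wiener_moment2 H f a b =
     (LINT z:({a..b} \<times> {a..b})|lborel. f (fst z) * f (snd z) * fbm_kernel H (fst z - snd z))"

text \<open>E || int_a^b Psi dW^H ||^2_{V_gamma} for a deterministic operator-valued integrand Psi,
  where W^H = sum_n w_n^H e_n is the cylindrical fBm with independent scalar fBms w_n^H:
  sum over n (noise directions) and i (coordinates in V) of
  lam_i^gamma * E|int <Psi(r) e_n, e_i> dw_n^H(r)|^2.\<close>
definition stoch_moment2 ::
  "real \<Rightarrow> (nat \<Rightarrow> 'a::real_inner) \<Rightarrow> (nat \<Rightarrow> real) \<Rightarrow> real \<Rightarrow> (real \<Rightarrow> 'a \<Rightarrow> 'a) \<Rightarrow> real \<Rightarrow> real \<Rightarrow> ennreal" where
  "stoch_moment2 H e lam \<gamma> \<Psi> a b =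
     (\<Sum>n. \<Sum>i. ennreal (lam i powr \<gamma> * wiener_moment2 H (\<lambda>r. \<Psi> r (e n) \<bullet> e i) a b))"

text \<open>The stochastic integral int_a^b Psi dW^H is well defined in L^2(Omega;V):
  every scalar Wiener integral is well defined and the V-valued series converges in L^2.\<close>
definition stoch_well_defined ::
  "real \<Rightarrow> (nat \<Rightarrow> 'a::real_inner) \<Rightarrow> (nat \<Rightarrow> real) \<Rightarrow> (real \<Rightarrow> 'a \<Rightarrow> 'a) \<Rightarrow> real \<Rightarrow> real \<Rightarrow> bool" where
  "stoch_well_defined H e lam \<Psi> a b \<longleftrightarrow>
     (\<forall>n i. wiener_integrable H (\<lambda>r. \<Psi> r (e n) \<bullet> e i) a b) \<and>
     stoch_moment2 H e lam 0 \<Psi> a b < \<infinity>"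

text \<open>Integrand of O_t = int_0^t E(t-r) Phi dW^H(r).\<close>
definition conv_integrand :: "(nat \<Rightarrow> 'a::real_inner) \<Rightarrow> (nat \<Rightarrow> real) \<Rightarrow> ('a \<Rightarrow> 'a) \<Rightarrow> real \<Rightarrow> real \<Rightarrow> 'a \<Rightarrow> 'a" where
  "conv_integrand e lam \<Phi> t r x = sgrp e lam (t - r) (\<Phi> x)"

text \<open>Integrand on [0,t] of O_t - O_s (s < t): E(t-r)Phi - 1_{r <= s} E(s-r)Phi.\<close>
definition conv_diff_integrand :: "(nat \<Rightarrow> 'a::real_inner) \<Rightarrow> (nat \<Rightarrow> real) \<Rightarrow> ('a \<Rightarrow> 'a) \<Rightarrow> real \<Rightarrow> real \<Rightarrow> real \<Rightarrow> 'a \<Rightarrow> 'a" where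
  "conv_diff_integrand e lam \<Phi> s t r x =
     sgrp e lam (t - r) (\<Phi> x) - (if r \<le> s then sgrp e lam (s - r) (\<Phi> x) else 0)"

end

theory Submission
  imports Defs
begin

text \<open>In the eigenbasis everything decouples: the \<open>(n, i)\<close> coordinate of each integrand is
  \<open>\<langle>\<Phi> e_n, e_i\<rangle>\<close> times a scalar function \<open>g\<close> with \<open>\<bar>g\<bar> \<le> 1\<close> and \<open>\<integral>_0^t \<bar>g\<bar> \<le> 2 m\<close>, where
  \<open>m = 1 / \<lambda>_i\<close> for \<open>O_t\<close> and \<open>m = min (t - s) (1 / \<lambda>_i)\<close> for \<open>O_t - O_s\<close>. Splitting the
  kernel \<open>\<bar>u - v\<bar>^(2H - 2)\<close> at distance \<open>m\<close> from the diagonal bounds the second moment of the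
  Wiener integral of \<open>g\<close> by \<open>8 H^2 m^(2H)\<close>. Finally \<open>\<lambda>_i^\<gamma> m^(2H)\<close> is at most \<open>\<lambda>_i^(\<beta> - 1)\<close>
  times \<open>\<lambda>_1^(\<gamma> - (2H + \<beta> - 1))\<close>, resp. \<open>(t - s)^(2H + \<beta> - 1 - \<delta>)\<close>, and summing over all modes
  gives the Hilbert--Schmidt norm of \<open>A^((\<beta> - 1)/2) \<Phi>\<close>; the constant is \<open>c = \<surd>8 H\<close>.\<close>

section \<open>Orthonormal expansions\<close>

lemma orthonormal_basis_inner: "orthonormal_basis e \<Longrightarrow> e i \<bullet> e j = (if i = j then 1 else 0)"
  unfolding orthonormal_basis_def by blast

lemma inner_sum_orthonormal:
  assumes "orthonormal_basis e" "finite A"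
  shows "(\<Sum>i\<in>A. c i *\<^sub>R e i) \<bullet> e j = (if j \<in> A then c j else 0)"
  using assms(2)
  by (simp add: inner_sum_left orthonormal_basis_inner[OF assms(1)] if_distrib[of "\<lambda>x. c _ * x"]
      sum.delta' cong: if_cong)

lemma norm_sum_orthonormal:
  assumes "orthonormal_basis e" "finite A"
  shows "(norm (\<Sum>i\<in>A. c i *\<^sub>R e i))\<^sup>2 = (\<Sum>i\<in>A. (c i)\<^sup>2)"
proof -
  have "(norm (\<Sum>i\<in>A. c i *\<^sub>R e i))\<^sup>2 = (\<Sum>j\<in>A. c j * ((\<Sum>i\<in>A. c i *\<^sub>R e i) \<bullet> e j))"
    by (simp add: power2_norm_eq_inner inner_sum_right)
  also have "\<dots> = (\<Sum>j\<in>A. (c j)\<^sup>2)"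
    by (rule sum.cong) (auto simp: inner_sum_orthonormal[OF assms] power2_eq_square)
  finally show ?thesis .
qed

lemma bessel_inequality:
  assumes "orthonormal_basis e"
  shows "(\<Sum>i<N. (x \<bullet> e i)\<^sup>2) \<le> (norm x)\<^sup>2"
proof -
  define p where "p = (\<Sum>i<N. (x \<bullet> e i) *\<^sub>R e i)"
  have px: "p \<bullet> x = (\<Sum>i<N. (x \<bullet> e i)\<^sup>2)"
    unfolding p_def inner_sum_left by (simp add: power2_eq_square inner_commute)
  have pp: "p \<bullet> p = (\<Sum>i<N. (x \<bullet> e i)\<^sup>2)"
    using norm_sum_orthonormal[OF assms, of "{..<N}" "\<lambda>i. x \<bullet> e i"]
    by (simp add: p_def power2_norm_eq_inner)
  have "0 \<le> (x - p) \<bullet> (x - p)" by simp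
  also have "\<dots> = x \<bullet> x - 2 * (p \<bullet> x) + p \<bullet> p"
    by (simp add: inner_diff_left inner_diff_right inner_commute)
  finally show ?thesis using px pp by (simp add: power2_norm_eq_inner)
qed

lemma summable_bounded_multiplier_coeff:
  assumes "orthonormal_basis e" "\<And>i. \<bar>d i\<bar> \<le> B"
  shows "summable (\<lambda>i. (d i * (x \<bullet> e i))\<^sup>2)"
proof (rule summable_comparison_test)
  show "summable (\<lambda>i. B\<^sup>2 * (x \<bullet> e i)\<^sup>2)"
    by (intro summable_mult summableI_nonneg_bounded[where x="(norm x)\<^sup>2"])
       (auto simp: bessel_inequality[OF assms(1)])
  have "(d i)\<^sup>2 \<le> B\<^sup>2" for i
    using power_mono[OF assms(2)[of i] abs_ge_zero, of 2] by simp
  then show "\<exists>N. \<forall>i\<ge>N. norm ((d i * (x \<bullet> e i))\<^sup>2) \<le> B\<^sup>2 * (x \<bullet> e i)\<^sup>2"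
    by (auto simp: power_mult_distrib mult_right_mono)
qed

lemma summable_orthonormal_series:
  fixes e :: "nat \<Rightarrow> 'a::{real_inner,complete_space}"
  assumes e: "orthonormal_basis e" and c: "summable (\<lambda>i. (c i)\<^sup>2)"
  shows "summable (\<lambda>i. c i *\<^sub>R e i)"
proof -
  have "Cauchy (\<lambda>n. \<Sum>i<n. c i *\<^sub>R e i)"
  proof (rule CauchyI)
    fix r :: real assume "0 < r"
    then obtain N where N: "\<And>m n. m \<ge> N \<Longrightarrow> norm (\<Sum>i\<in>{m..<n}. (c i)\<^sup>2) < r\<^sup>2"
      using c unfolding summable_Cauchy by (meson zero_less_power)
    have tail: "norm ((\<Sum>i<n. c i *\<^sub>R e i) - (\<Sum>i<m. c i *\<^sub>R e i)) < r" if "N \<le> m" "m \<le> n" for m n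
    proof -
      have "(\<Sum>i<n. c i *\<^sub>R e i) - (\<Sum>i<m. c i *\<^sub>R e i) = (\<Sum>i\<in>{m..<n}. c i *\<^sub>R e i)"
        using sum_diff_nat_ivl[OF le0 \<open>m \<le> n\<close>] by (simp add: atLeast0LessThan)
      then show ?thesis
        using N[OF that(1), of n] norm_sum_orthonormal[OF e, of "{m..<n}" c] \<open>0 < r\<close>
        by (simp add: power2_less_imp_less)
    qed
    show "\<exists>M. \<forall>m\<ge>M. \<forall>n\<ge>M. norm ((\<Sum>i<m. c i *\<^sub>R e i) - (\<Sum>i<n. c i *\<^sub>R e i)) < r"
      by (metis tail norm_minus_commute nat_le_linear)
  qed
  then show ?thesis
    by (simp add: Cauchy_convergent_iff summable_iff_convergent)
qed

lemma orthonormal_series: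
  fixes e :: "nat \<Rightarrow> 'a::{real_inner,complete_space}"
  assumes e: "orthonormal_basis e" and c: "summable (\<lambda>i. (c i)\<^sup>2)"
  shows "(\<Sum>i. c i *\<^sub>R e i) \<bullet> e j = c j"
    and "(norm (\<Sum>i. c i *\<^sub>R e i))\<^sup>2 = (\<Sum>i. (c i)\<^sup>2)"
proof -
  have S: "(\<lambda>i. c i *\<^sub>R e i) sums (\<Sum>i. c i *\<^sub>R e i)"
    using summable_orthonormal_series[OF e c] by (rule summable_sums)
  have coeff: "(\<Sum>i. c i *\<^sub>R e i) \<bullet> e j = c j" for j
  proof -
    have "(\<lambda>i. (c i *\<^sub>R e i) \<bullet> e j) sums ((\<Sum>i. c i *\<^sub>R e i) \<bullet> e j)"
      by (rule bounded_linear.sums[OF bounded_linear_inner_left S])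
    moreover have "(\<lambda>i. (c i *\<^sub>R e i) \<bullet> e j) = (\<lambda>i. if i = j then c i else 0)"
      by (auto simp: orthonormal_basis_inner[OF e])
    ultimately show ?thesis
      using sums_single sums_unique2 by metis
  qed
  then show "(\<Sum>i. c i *\<^sub>R e i) \<bullet> e j = c j" .
  have "(\<lambda>i. (\<Sum>i. c i *\<^sub>R e i) \<bullet> (c i *\<^sub>R e i)) sums ((\<Sum>i. c i *\<^sub>R e i) \<bullet> (\<Sum>i. c i *\<^sub>R e i))"
    by (rule bounded_linear.sums[OF bounded_linear_inner_right S])
  then have "(\<lambda>i. (c i)\<^sup>2) sums (norm (\<Sum>i. c i *\<^sub>R e i))\<^sup>2"
    unfolding power2_norm_eq_inner by (simp add: coeff power2_eq_square)
  then show "(norm (\<Sum>i. c i *\<^sub>R e i))\<^sup>2 = (\<Sum>i. (c i)\<^sup>2)"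
    by (rule sums_unique)
qed

section \<open>Wiener integrals against the fractional kernel\<close>

lemma nn_integral_abs_powr_interval:
  assumes \<alpha>: "-1 < \<alpha>" and \<rho>: "0 < \<rho>"
  shows "(\<integral>\<^sup>+v. ennreal (\<bar>u - v\<bar> powr \<alpha> * indicator {u-\<rho>..u+\<rho>} v) \<partial>lborel)
         = ennreal (2 * \<rho> powr (\<alpha> + 1) / (\<alpha> + 1))"
proof -
  define I where "I = \<rho> powr (\<alpha> + 1) / (\<alpha> + 1)"
  have "((\<lambda>x. x powr \<alpha>) has_integral I) {0..\<rho>}"
    unfolding I_def using has_integral_powr_from_0[OF \<alpha>] \<rho> by simp
  then have right: "((\<lambda>x. \<bar>x\<bar> powr \<alpha>) has_integral I) {0..\<rho>}"
    by (rule has_integral_eq[rotated]) simp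
  have "((\<lambda>x. \<bar>-x\<bar> powr \<alpha>) has_integral I) {-\<rho>..-0}"
    using has_integral_reflect_real[where f="\<lambda>x. \<bar>x\<bar> powr \<alpha>", THEN iffD2, OF right] by simp
  then have left: "((\<lambda>x. \<bar>x\<bar> powr \<alpha>) has_integral I) {-\<rho>..0}" by simp
  have "((\<lambda>x. \<bar>x\<bar> powr \<alpha>) has_integral (I + I)) {-\<rho>..\<rho>}"
    by (rule has_integral_combine[OF _ _ left right]) (use \<rho> in auto)
  then have centred: "(\<integral>\<^sup>+x. ennreal (\<bar>x\<bar> powr \<alpha>) * indicator {-\<rho>..\<rho>} x \<partial>lborel) = ennreal (I + I)"
    by (rule nn_integral_has_integral_lebesgue'[rotated]) simp
  have "(\<integral>\<^sup>+v. ennreal (\<bar>u - v\<bar> powr \<alpha> * indicator {u-\<rho>..u+\<rho>} v) \<partial>lborel)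
      = (\<integral>\<^sup>+x. ennreal (\<bar>u - (u + 1 * x)\<bar> powr \<alpha> * indicator {u-\<rho>..u+\<rho>} (u + 1 * x)) \<partial>lborel)"
    using nn_integral_real_affine[of "\<lambda>v. ennreal (\<bar>u - v\<bar> powr \<alpha> * indicator {u-\<rho>..u+\<rho>} v)" 1 u]
    by simp
  also have "\<dots> = (\<integral>\<^sup>+x. ennreal (\<bar>x\<bar> powr \<alpha>) * indicator {-\<rho>..\<rho>} x \<partial>lborel)"
    by (intro nn_integral_cong) (auto simp: indicator_def)
  finally show ?thesis using centred unfolding I_def by simp
qed

lemma abs_powr_kernel_split_le:
  fixes x y u v \<rho> \<alpha> :: real
  assumes \<alpha>: "\<alpha> \<le> 0" and \<rho>: "0 < \<rho>" and xy: "0 \<le> x" "0 \<le> y" "y \<le> 1"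
  shows "ennreal (x * y * \<bar>u - v\<bar> powr \<alpha>)
      \<le> ennreal x * ennreal (\<bar>u - v\<bar> powr \<alpha> * indicator {u-\<rho>..u+\<rho>} v)
         + ennreal (\<rho> powr \<alpha>) * ennreal x * ennreal y"
proof (cases "\<bar>u - v\<bar> \<le> \<rho>")
  case True
  then have "v \<in> {u-\<rho>..u+\<rho>}" by auto
  then have "ennreal (x * y * \<bar>u - v\<bar> powr \<alpha>)
      \<le> ennreal x * ennreal (\<bar>u - v\<bar> powr \<alpha> * indicator {u-\<rho>..u+\<rho>} v)"
    using xy by (simp add: ennreal_mult[symmetric] mult_right_mono mult_left_le)
  then show ?thesis by (rule order_trans) simp
next
  case False
  then have "\<bar>u - v\<bar> powr \<alpha> \<le> \<rho> powr \<alpha>" using \<rho> \<alpha> by (intro powr_mono2') auto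
  then have "x * y * \<bar>u - v\<bar> powr \<alpha> \<le> x * y * \<rho> powr \<alpha>"
    using xy by (intro mult_left_mono) auto
  then have "ennreal (x * y * \<bar>u - v\<bar> powr \<alpha>) \<le> ennreal (\<rho> powr \<alpha>) * ennreal x * ennreal y"
    using xy by (simp add: ennreal_mult[symmetric] ennreal_leI mult_ac)
  then show ?thesis by (rule order_trans) simp
qed

text \<open>Split the kernel at distance \<open>\<rho>\<close> from the diagonal: near it, integrate the kernel
  exactly and use \<open>F \<le> 1\<close>; away from it, bound the kernel by \<open>\<rho> powr \<alpha>\<close>.\<close>
lemma nn_integral_riesz_kernel_le:
  fixes F :: "real \<Rightarrow> real"
  assumes \<alpha>: "-1 < \<alpha>" "\<alpha> \<le> 0" and F: "F \<in> borel_measurable borel" "\<And>x. 0 \<le> F x" "\<And>x. F x \<le> 1"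
    and \<rho>: "0 < \<rho>" and M: "0 \<le> M" "(\<integral>\<^sup>+x. F x \<partial>lborel) \<le> ennreal M"
  shows "(\<integral>\<^sup>+u. \<integral>\<^sup>+v. ennreal (F u * F v * \<bar>u - v\<bar> powr \<alpha>) \<partial>lborel \<partial>lborel)
         \<le> ennreal (2 * \<rho> powr (\<alpha> + 1) / (\<alpha> + 1) * M + \<rho> powr \<alpha> * M\<^sup>2)"
proof -
  define c where "c = 2 * \<rho> powr (\<alpha> + 1) / (\<alpha> + 1)"
  have c: "0 \<le> c" unfolding c_def using \<alpha> by simp
  define I where "I = (\<integral>\<^sup>+x. F x \<partial>lborel)"
  have [measurable]: "F \<in> borel_measurable lborel" using F(1) by simp
  have "(\<integral>\<^sup>+u. \<integral>\<^sup>+v. ennreal (F u * F v * \<bar>u - v\<bar> powr \<alpha>) \<partial>lborel \<partial>lborel)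
      \<le> (\<integral>\<^sup>+u. \<integral>\<^sup>+v. ennreal (F u) * ennreal (\<bar>u - v\<bar> powr \<alpha> * indicator {u-\<rho>..u+\<rho>} v)
         + ennreal (\<rho> powr \<alpha>) * ennreal (F u) * ennreal (F v) \<partial>lborel \<partial>lborel)"
    using \<alpha>(2) \<rho> F(2,3) by (intro nn_integral_mono abs_powr_kernel_split_le) auto
  also have "\<dots> = (\<integral>\<^sup>+u. ennreal (F u) * ennreal c + ennreal (\<rho> powr \<alpha>) * ennreal (F u) * I \<partial>lborel)"
    unfolding c_def I_def
    by (intro nn_integral_cong, subst nn_integral_add; (subst nn_integral_cmult)?; (subst nn_integral_cmult)?)
       (auto simp: nn_integral_abs_powr_interval[OF \<alpha>(1) \<rho>])
  also have "\<dots> = I * ennreal c + ennreal (\<rho> powr \<alpha>) * I * I"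
    unfolding I_def
    by (subst nn_integral_add; (subst nn_integral_multc)?; (subst nn_integral_cmult)?; (subst nn_integral_multc)?)
       (auto simp: mult.assoc)
  also have "\<dots> \<le> ennreal M * ennreal c + ennreal (\<rho> powr \<alpha>) * ennreal M * ennreal M"
    using M(2) unfolding I_def[symmetric] by (intro add_mono mult_mono) auto
  also have "\<dots> = ennreal (c * M + \<rho> powr \<alpha> * M\<^sup>2)"
    using M(1) c by (simp add: ennreal_mult ennreal_plus power2_eq_square mult_ac)
  finally show ?thesis unfolding c_def .
qed

lemma integrable_and_integral_le_of_nn_integral_abs:
  fixes f :: "'b \<Rightarrow> real"
  assumes "f \<in> borel_measurable M" "0 \<le> B" "(\<integral>\<^sup>+x. ennreal \<bar>f x\<bar> \<partial>M) \<le> ennreal B"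
  shows "integrable M f" and "integral\<^sup>L M f \<le> B"
proof -
  show "integrable M f"
    unfolding integrable_iff_bounded using assms by (auto simp: top_unique ennreal_less_top intro: le_less_trans)
  have "(\<integral>\<^sup>+x. ennreal (f x) \<partial>M) \<le> (\<integral>\<^sup>+x. ennreal \<bar>f x\<bar> \<partial>M)"
    by (intro nn_integral_mono ennreal_leI) simp
  then show "integral\<^sup>L M f \<le> B"
    using assms(2,3) by (intro integral_real_bounded) auto
qed

lemma fbm_kernel_split_constant:
  fixes H m :: real
  assumes "1/2 < H" "0 < m"
  shows "H * (2 * H - 1) * (2 * m powr (2 * H - 1) / (2 * H - 1) * (2 * m) + m powr (2 * H - 2) * (2 * m)\<^sup>2)
         = 8 * H\<^sup>2 * m powr (2 * H)"
proof -
  have "m powr (2 * H - 1) * m = m powr (2 * H)"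
    using assms(2) powr_mult_base[of m "2 * H - 1"] by (simp add: mult.commute)
  moreover have "m powr (2 * H - 2) * m\<^sup>2 = m powr (2 * H)"
    using assms(2) by (simp add: powr_add[symmetric] flip: powr_numeral)
  moreover have "2 * m powr (2 * H - 1) / (2 * H - 1) * (2 * m) + m powr (2 * H - 2) * (2 * m)\<^sup>2
      = 4 * (m powr (2 * H - 1) * m) / (2 * H - 1) + 4 * (m powr (2 * H - 2) * m\<^sup>2)"
    by (simp add: power2_eq_square)
  ultimately show ?thesis
    using assms(1) by (simp add: field_simps power2_eq_square)
qed

lemma wiener_moment2_le:
  fixes f g :: "real \<Rightarrow> real"
  assumes H: "1/2 < H" "H \<le> 1"
    and fg: "\<And>r. r \<in> {a..b} \<Longrightarrow> f r = c * g r"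
    and g: "g \<in> borel_measurable borel" "\<And>r. r \<in> {a..b} \<Longrightarrow> \<bar>g r\<bar> \<le> 1"
    and m: "0 < m" "(\<integral>\<^sup>+r. ennreal (\<bar>g r\<bar> * indicator {a..b} r) \<partial>lborel) \<le> ennreal (2 * m)"
  shows "wiener_integrable H f a b"
    and "wiener_moment2 H f a b \<le> 8 * H\<^sup>2 * c\<^sup>2 * m powr (2 * H)"
proof -
  define \<kappa> where "\<kappa> = H * (2 * H - 1)"
  define \<alpha> where "\<alpha> = 2 * H - 2"
  define B where "B = 2 * m powr (\<alpha> + 1) / (\<alpha> + 1) * (2 * m) + m powr \<alpha> * (2 * m)\<^sup>2"
  define F where "F r = \<bar>g r\<bar> * indicator {a..b} r" for r
  define J where "J z = c\<^sup>2 * \<kappa> * (g (fst z) * indicator {a..b} (fst z))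
    * (g (snd z) * indicator {a..b} (snd z)) * \<bar>fst z - snd z\<bar> powr \<alpha>" for z :: "real \<times> real"
  have \<kappa>: "0 < \<kappa>" and \<alpha>: "-1 < \<alpha>" "\<alpha> \<le> 0"
    using H by (auto simp: \<kappa>_def \<alpha>_def)
  have [measurable]: "g \<in> borel_measurable borel" by (rule g(1))
  have [measurable]: "F \<in> borel_measurable borel" unfolding F_def[abs_def] by measurable
  have J_eq: "(\<lambda>z. indicator ({a..b} \<times> {a..b}) z *\<^sub>R (f (fst z) * f (snd z) * fbm_kernel H (fst z - snd z))) = J"
  proof
    fix z :: "real \<times> real"
    obtain u v where z: "z = (u, v)" by (cases z)
    show "indicator ({a..b} \<times> {a..b}) z *\<^sub>R (f (fst z) * f (snd z) * fbm_kernel H (fst z - snd z)) = J z"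
      by (cases "u \<in> {a..b}"; cases "v \<in> {a..b}")
         (simp_all add: z J_def fg fbm_kernel_def \<kappa>_def \<alpha>_def indicator_def power2_eq_square mult_ac)
  qed
  have "(\<integral>\<^sup>+z. ennreal \<bar>J z\<bar> \<partial>lborel)
      = (\<integral>\<^sup>+z. ennreal (c\<^sup>2 * \<kappa>) * ennreal (F (fst z) * F (snd z) * \<bar>fst z - snd z\<bar> powr \<alpha>) \<partial>(lborel \<Otimes>\<^sub>M lborel))"
    unfolding lborel_prod using \<kappa>
    by (intro nn_integral_cong) (auto simp: J_def F_def abs_mult indicator_def ennreal_mult[symmetric] mult_ac)
  also have "\<dots> = ennreal (c\<^sup>2 * \<kappa>) * (\<integral>\<^sup>+u. \<integral>\<^sup>+v. ennreal (F u * F v * \<bar>u - v\<bar> powr \<alpha>) \<partial>lborel \<partial>lborel)"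
    by (subst nn_integral_cmult) (simp_all add: lborel.nn_integral_fst[symmetric])
  also have "\<dots> \<le> ennreal (c\<^sup>2 * \<kappa>) * ennreal B"
    unfolding B_def
    by (intro mult_left_mono nn_integral_riesz_kernel_le \<alpha> m)
       (use m g(2) in \<open>auto simp: F_def indicator_def\<close>)
  also have "\<dots> = ennreal (8 * H\<^sup>2 * c\<^sup>2 * m powr (2 * H))"
  proof -
    have "\<kappa> * B = 8 * H\<^sup>2 * m powr (2 * H)"
      using fbm_kernel_split_constant[OF H(1) m(1)] by (simp add: B_def \<kappa>_def \<alpha>_def)
    moreover have "0 \<le> B" using m(1) \<alpha> by (simp add: B_def)
    ultimately show ?thesis using \<kappa> by (simp add: ennreal_mult[symmetric] mult_ac)
  qed
  finally have J_bound: "(\<integral>\<^sup>+z. ennreal \<bar>J z\<bar> \<partial>lborel) \<le> ennreal (8 * H\<^sup>2 * c\<^sup>2 * m powr (2 * H))" .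
  have "J \<in> borel_measurable lborel"
    unfolding lborel_prod[symmetric] J_def[abs_def] by measurable
  from integrable_and_integral_le_of_nn_integral_abs[OF this _ J_bound]
  have "integrable lborel J" "integral\<^sup>L lborel J \<le> 8 * H\<^sup>2 * c\<^sup>2 * m powr (2 * H)"
    by simp_all
  then show "wiener_integrable H f a b" "wiener_moment2 H f a b \<le> 8 * H\<^sup>2 * c\<^sup>2 * m powr (2 * H)"
    unfolding wiener_integrable_def set_integrable_def wiener_moment2_def set_lebesgue_integral_def J_eq
    by auto
qed

section \<open>Exponential decay estimates\<close>

lemma nn_integral_exp_decay:
  assumes "a \<le> b" "0 < c"
  shows "(\<integral>\<^sup>+r. ennreal (exp (- ((b - r) * c))) * indicator {a..b} r \<partial>lborel)
         = ennreal ((1 - exp (- ((b - a) * c))) / c)"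
proof -
  have "((\<lambda>r. exp (- ((b - r) * c)) / c) has_real_derivative exp (- ((b - r) * c))) (at r within {a..b})"
    for r using assms(2) by (auto intro!: derivative_eq_intros)
  then have "((\<lambda>r. exp (- ((b - r) * c))) has_integral (exp (- ((b - b) * c)) / c - exp (- ((b - a) * c)) / c)) {a..b}"
    by (intro fundamental_theorem_of_calculus assms(1))
       (simp add: has_real_derivative_iff_has_vector_derivative)
  then have "((\<lambda>r. exp (- ((b - r) * c))) has_integral ((1 - exp (- ((b - a) * c))) / c)) {a..b}"
    by (simp add: diff_divide_distrib)
  then show ?thesis
    by (rule nn_integral_has_integral_lebesgue'[rotated]) simp
qed

lemma one_minus_exp_div_le:
  fixes h l :: real
  assumes "0 \<le> h" "0 < l"
  shows "(1 - exp (- (h * l))) / l \<le> min h (1 / l)"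
proof -
  have "1 - exp (- (h * l)) \<le> h * l"
    using exp_ge_add_one_self[of "- (h * l)"] by simp
  moreover have "1 - exp (- (h * l)) \<le> 1" by simp
  ultimately show ?thesis
    using assms(2) by (simp add: divide_right_mono pos_divide_le_eq)
qed

lemma abs_exp_increment_le_one:
  fixes l :: real
  assumes "r \<le> t" "0 < l"
  shows "\<bar>exp (- ((t - r) * l)) - (if r \<le> s then exp (- ((s - r) * l)) else 0)\<bar> \<le> 1"
proof (cases "r \<le> s")
  case True
  have "exp (- ((t - r) * l)) \<le> 1" "exp (- ((s - r) * l)) \<le> 1"
    using assms True by auto
  then have "\<bar>exp (- ((t - r) * l)) - exp (- ((s - r) * l))\<bar> \<le> 1"
    using exp_gt_zero[of "- ((t - r) * l)"] exp_gt_zero[of "- ((s - r) * l)"] by arith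
  then show ?thesis using True by simp
qed (use assms in simp)

lemma abs_exp_increment_le:
  fixes l :: real
  assumes st: "0 \<le> s" "s \<le> t" and l: "0 < l"
  shows "\<bar>exp (- ((t - r) * l)) - (if r \<le> s then exp (- ((s - r) * l)) else 0)\<bar> * indicator {0..t} r
    \<le> (1 - exp (- ((t - s) * l))) * (exp (- ((s - r) * l)) * indicator {0..s} r)
       + exp (- ((t - r) * l)) * indicator {s..t} r"
proof -
  define E where "E = exp (- ((t - s) * l))"
  have E: "0 < E" "E \<le> 1" using st l by (auto simp: E_def)
  have shift: "exp (- ((t - r) * l)) = E * exp (- ((s - r) * l))"
    by (simp add: E_def exp_add[symmetric] algebra_simps)
  have "\<bar>exp (- ((t - r) * l)) - (if r \<le> s then exp (- ((s - r) * l)) else 0)\<bar> * indicator {0..t} r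
      \<le> (1 - E) * (exp (- ((s - r) * l)) * indicator {0..s} r) + exp (- ((t - r) * l)) * indicator {s..t} r"
  proof (cases "r \<in> {0..t}")
    case r: True
    show ?thesis
    proof (cases "r \<le> s")
      case True
      have "\<bar>E * exp (- ((s - r) * l)) - exp (- ((s - r) * l))\<bar> = (1 - E) * exp (- ((s - r) * l))"
        using E by (simp add: abs_if algebra_simps mult_le_cancel_right1)
      then show ?thesis
        using r True E by (simp add: shift indicator_def)
    qed (use r in \<open>simp add: indicator_def\<close>)
  qed (use E st in \<open>auto simp: indicator_def\<close>)
  then show ?thesis unfolding E_def .
qed

lemma nn_integral_exp_increment_le:
  fixes l :: real
  assumes st: "0 \<le> s" "s \<le> t" and l: "0 < l"
  shows "(\<integral>\<^sup>+r. ennreal (\<bar>exp (- ((t - r) * l)) - (if r \<le> s then exp (- ((s - r) * l)) else 0)\<bar>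
           * indicator {0..t} r) \<partial>lborel) \<le> ennreal (2 * min (t - s) (1 / l))"
proof -
  define E where "E = exp (- ((t - s) * l))"
  have E: "0 < E" "E \<le> 1" using st l by (auto simp: E_def)
  have "(\<integral>\<^sup>+r. ennreal (\<bar>exp (- ((t - r) * l)) - (if r \<le> s then exp (- ((s - r) * l)) else 0)\<bar>
           * indicator {0..t} r) \<partial>lborel)
      \<le> (\<integral>\<^sup>+r. ennreal (1 - E) * (ennreal (exp (- ((s - r) * l))) * indicator {0..s} r)
           + ennreal (exp (- ((t - r) * l))) * indicator {s..t} r \<partial>lborel)"
    using E by (intro nn_integral_mono order_trans[OF ennreal_leI[OF abs_exp_increment_le[OF st l]]])
      (simp add: E_def ennreal_plus ennreal_mult indicator_def)
  also have "\<dots> = ennreal (1 - E) * ennreal ((1 - exp (- (s * l))) / l) + ennreal ((1 - E) / l)"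
    using st l
    by (simp add: nn_integral_add nn_integral_cmult nn_integral_exp_decay E_def)
  also have "\<dots> \<le> ennreal (2 * min (t - s) (1 / l))"
  proof -
    have early: "(1 - E) * ((1 - exp (- (s * l))) / l) \<le> (1 - E) / l"
      using E l by (simp add: mult_left_le divide_right_mono)
    have late: "(1 - E) / l \<le> min (t - s) (1 / l)"
      unfolding E_def using st l by (intro one_minus_exp_div_le) auto
    have "(1 - E) * ((1 - exp (- (s * l))) / l) + (1 - E) / l \<le> 2 * min (t - s) (1 / l)"
      unfolding mult_2 by (rule add_mono[OF order_trans[OF early late] late])
    moreover have "ennreal (1 - E) * ennreal ((1 - exp (- (s * l))) / l) + ennreal ((1 - E) / l)
        = ennreal ((1 - E) * ((1 - exp (- (s * l))) / l) + (1 - E) / l)"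
      using E l st by (simp add: ennreal_mult[symmetric] ennreal_plus)
    ultimately show ?thesis by (simp add: ennreal_leI)
  qed
  finally show ?thesis .
qed

lemma powr_inverse_le:
  fixes l l0 \<gamma> p \<rho> :: real
  assumes "0 < l0" "l0 \<le> l" "\<gamma> \<le> p"
  shows "l powr \<gamma> * (1 / l) powr \<rho> \<le> l0 powr (\<gamma> - p) * l powr (p - \<rho>)"
proof -
  have "l powr \<gamma> * (1 / l) powr \<rho> = l powr (\<gamma> - p) * l powr (p - \<rho>)"
    using assms by (simp add: powr_divide powr_diff)
  also have "\<dots> \<le> l0 powr (\<gamma> - p) * l powr (p - \<rho>)"
    using assms by (intro mult_right_mono powr_mono2') auto
  finally show ?thesis .
qed

lemma powr_min_le:
  fixes l h \<delta> p \<rho> :: real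
  assumes "0 < l" "0 < h" "0 \<le> \<delta>" "\<delta> \<le> p" "p \<le> \<rho>"
  shows "l powr \<delta> * (min h (1 / l)) powr \<rho> \<le> h powr (p - \<delta>) * l powr (p - \<rho>)"
proof -
  define \<mu> where "\<mu> = min h (1 / l)"
  have \<mu>: "0 < \<mu>" "\<mu> \<le> h" "\<mu> \<le> 1 / l" using assms by (auto simp: \<mu>_def)
  have "l powr \<delta> * \<mu> powr \<rho> = l powr \<delta> * \<mu> powr (\<rho> - p + \<delta>) * \<mu> powr (p - \<delta>)"
    using \<mu> by (simp add: powr_add[symmetric])
  also have "\<dots> \<le> l powr \<delta> * (1 / l) powr (\<rho> - p + \<delta>) * h powr (p - \<delta>)"
    using assms \<mu> by (intro mult_mono mult_left_mono powr_mono2) auto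
  also have "l powr \<delta> * (1 / l) powr (\<rho> - p + \<delta>) = l powr (p - \<rho>)"
    using assms by (simp add: powr_divide powr_diff[symmetric])
  finally show ?thesis unfolding \<mu>_def by (simp add: mult.commute)
qed

section \<open>The spectral setting\<close>

locale spectral_basis =
  fixes e :: "nat \<Rightarrow> 'a::{real_inner,complete_space}" and lam :: "nat \<Rightarrow> real"
  assumes orthonormal: "orthonormal_basis e" and spectrum: "admissible_spectrum lam"
begin

lemma lam_ge_lam0: "lam 0 \<le> lam i"
  using spectrum unfolding admissible_spectrum_def mono_def by simp

lemma lam_pos: "0 < lam i"
  using spectrum lam_ge_lam0[of i] unfolding admissible_spectrum_def by linarith

lemma inner_sgrp:
  assumes "0 \<le> \<tau>"
  shows "sgrp e lam \<tau> x \<bullet> e i = exp (- (\<tau> * lam i)) * (x \<bullet> e i)"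
proof -
  have "summable (\<lambda>j. (exp (- (\<tau> * lam j)) * (x \<bullet> e j))\<^sup>2)"
    by (rule summable_bounded_multiplier_coeff[OF orthonormal, where B = 1])
       (use assms lam_pos[THEN less_imp_le] in \<open>auto intro!: mult_nonneg_nonneg\<close>)
  then show ?thesis
    unfolding sgrp_def by (rule orthonormal_series(1)[OF orthonormal])
qed

lemma norm_frac_pow:
  assumes "a \<le> 0"
  shows "(norm (frac_pow e lam (a / 2) x))\<^sup>2 = (\<Sum>i. lam i powr a * (x \<bullet> e i)\<^sup>2)"
    and "summable (\<lambda>i. lam i powr a * (x \<bullet> e i)\<^sup>2)"
proof -
  have square: "(lam i powr (a / 2) * y)\<^sup>2 = lam i powr a * y\<^sup>2" for i y
    by (simp add: power_mult_distrib power2_eq_square powr_add[symmetric])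
  have "summable (\<lambda>i. (lam i powr (a / 2) * (x \<bullet> e i))\<^sup>2)"
    by (rule summable_bounded_multiplier_coeff[OF orthonormal, where B = "lam 0 powr (a / 2)"])
       (use assms lam_pos lam_ge_lam0 in \<open>simp add: powr_mono2'\<close>)
  then show "(norm (frac_pow e lam (a / 2) x))\<^sup>2 = (\<Sum>i. lam i powr a * (x \<bullet> e i)\<^sup>2)"
    and "summable (\<lambda>i. lam i powr a * (x \<bullet> e i)\<^sup>2)"
    using orthonormal_series(2)[OF orthonormal] by (simp_all add: frac_pow_def square)
qed

lemma stoch_moment2_le_hs_norm2:
  assumes "\<beta> \<le> 1" "0 \<le> C"
    and mode: "\<And>n i. lam i powr \<gamma> * wiener_moment2 H (\<lambda>r. \<Psi> r (e n) \<bullet> e i) a b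
                 \<le> C * (lam i powr (\<beta> - 1) * (\<Phi> (e n) \<bullet> e i)\<^sup>2)"
  shows "stoch_moment2 H e lam \<gamma> \<Psi> a b \<le> ennreal C * hs_norm2 e (frac_pow e lam ((\<beta> - 1) / 2) \<circ> \<Phi>)"
proof -
  define w where "w = (\<lambda>n i. lam i powr (\<beta> - 1) * (\<Phi> (e n) \<bullet> e i)\<^sup>2)"
  have "0 \<le> w n i" for n i by (simp add: w_def)
  moreover have "summable (w n)" for n
    using norm_frac_pow(2)[of "\<beta> - 1" "\<Phi> (e n)"] assms(1) by (simp add: w_def)
  ultimately have "(\<Sum>i. ennreal (w n i)) = ennreal (\<Sum>i. w n i)" for n
    by (rule suminf_ennreal2)
  moreover have "stoch_moment2 H e lam \<gamma> \<Psi> a b \<le> (\<Sum>n. \<Sum>i. ennreal C * ennreal (w n i))"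
    unfolding stoch_moment2_def using assms(2) mode
    by (intro suminf_le summableI) (auto simp: w_def ennreal_mult[symmetric] intro!: ennreal_leI)
  ultimately show ?thesis
    using assms(1) by (simp add: hs_norm2_def norm_frac_pow(1) w_def)
qed

lemma wiener_moment2_conv_integrand:
  assumes H: "1/2 < H" "H \<le> 1" and t: "0 \<le> t"
  shows "wiener_integrable H (\<lambda>r. conv_integrand e lam \<Phi> t r (e n) \<bullet> e i) 0 t"
    and "wiener_moment2 H (\<lambda>r. conv_integrand e lam \<Phi> t r (e n) \<bullet> e i) 0 t
           \<le> 8 * H\<^sup>2 * (\<Phi> (e n) \<bullet> e i)\<^sup>2 * (1 / lam i) powr (2 * H)"
proof -
  define g where "g r = exp (- ((t - r) * lam i))" for r
  have coeff: "conv_integrand e lam \<Phi> t r (e n) \<bullet> e i = (\<Phi> (e n) \<bullet> e i) * g r" if "r \<in> {0..t}" for r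
    using that by (simp add: conv_integrand_def g_def inner_sgrp mult_ac)
  have "(\<integral>\<^sup>+r. ennreal (\<bar>g r\<bar> * indicator {0..t} r) \<partial>lborel)
      = (\<integral>\<^sup>+r. ennreal (exp (- ((t - r) * lam i))) * indicator {0..t} r \<partial>lborel)"
    by (intro nn_integral_cong) (simp add: g_def indicator_def)
  also have "\<dots> = ennreal ((1 - exp (- ((t - 0) * lam i))) / lam i)"
    by (rule nn_integral_exp_decay[OF t lam_pos])
  also have "\<dots> \<le> ennreal (2 * (1 / lam i))"
  proof (intro ennreal_leI)
    have "1 - exp (- ((t - 0) * lam i)) \<le> 2"
      using exp_gt_zero[of "- ((t - 0) * lam i)"] by linarith
    then show "(1 - exp (- ((t - 0) * lam i))) / lam i \<le> 2 * (1 / lam i)"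
      using lam_pos[of i] by (simp add: divide_right_mono)
  qed
  finally have g_int: "(\<integral>\<^sup>+r. ennreal (\<bar>g r\<bar> * indicator {0..t} r) \<partial>lborel) \<le> ennreal (2 * (1 / lam i))" .
  have g: "g \<in> borel_measurable borel" "\<And>r. r \<in> {0..t} \<Longrightarrow> \<bar>g r\<bar> \<le> 1"
    using lam_pos[of i] by (auto simp: g_def[abs_def])
  have m: "0 < 1 / lam i" using lam_pos[of i] by simp
  note bound = wiener_moment2_le[where a = 0 and b = t, OF H coeff g m g_int]
  show "wiener_integrable H (\<lambda>r. conv_integrand e lam \<Phi> t r (e n) \<bullet> e i) 0 t"
    using bound(1) lam_pos[of i] by simp
  show "wiener_moment2 H (\<lambda>r. conv_integrand e lam \<Phi> t r (e n) \<bullet> e i) 0 t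
           \<le> 8 * H\<^sup>2 * (\<Phi> (e n) \<bullet> e i)\<^sup>2 * (1 / lam i) powr (2 * H)"
    using bound(2) lam_pos[of i] by simp
qed

lemma wiener_moment2_conv_diff_integrand:
  assumes H: "1/2 < H" "H \<le> 1" and st: "0 \<le> s" "s < t"
  shows "wiener_moment2 H (\<lambda>r. conv_diff_integrand e lam \<Phi> s t r (e n) \<bullet> e i) 0 t
           \<le> 8 * H\<^sup>2 * (\<Phi> (e n) \<bullet> e i)\<^sup>2 * (min (t - s) (1 / lam i)) powr (2 * H)"
proof -
  define g where "g r = exp (- ((t - r) * lam i)) - (if r \<le> s then exp (- ((s - r) * lam i)) else 0)" for r
  have coeff: "conv_diff_integrand e lam \<Phi> s t r (e n) \<bullet> e i = (\<Phi> (e n) \<bullet> e i) * g r"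
    if "r \<in> {0..t}" for r
    using that by (simp add: conv_diff_integrand_def g_def inner_diff_left inner_sgrp algebra_simps)
  have g: "g \<in> borel_measurable borel" "\<And>r. r \<in> {0..t} \<Longrightarrow> \<bar>g r\<bar> \<le> 1"
    using lam_pos[of i] by (auto simp: g_def[abs_def] abs_exp_increment_le_one)
  have m: "0 < min (t - s) (1 / lam i)" using st lam_pos[of i] by simp
  have g_int: "(\<integral>\<^sup>+r. ennreal (\<bar>g r\<bar> * indicator {0..t} r) \<partial>lborel) \<le> ennreal (2 * min (t - s) (1 / lam i))"
    unfolding g_def using st by (intro nn_integral_exp_increment_le lam_pos) auto
  show ?thesis by (rule wiener_moment2_le(2)[where a = 0 and b = t, OF H coeff g m g_int])
qed

lemma stoch_moment2_conv_le:
  assumes H: "1/2 < H" "H \<le> 1" and \<beta>: "\<beta> \<le> 1" and \<gamma>: "\<gamma> \<le> 2 * H + \<beta> - 1" and t: "0 \<le> t"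
  shows "stoch_moment2 H e lam \<gamma> (conv_integrand e lam \<Phi> t) 0 t
    \<le> ennreal (8 * H\<^sup>2 * lam 0 powr (\<gamma> - (2 * H + \<beta> - 1))) * hs_norm2 e (frac_pow e lam ((\<beta> - 1) / 2) \<circ> \<Phi>)"
proof (rule stoch_moment2_le_hs_norm2[OF \<beta>])
  fix n i
  have "lam i powr \<gamma> * wiener_moment2 H (\<lambda>r. conv_integrand e lam \<Phi> t r (e n) \<bullet> e i) 0 t
      \<le> lam i powr \<gamma> * (8 * H\<^sup>2 * (\<Phi> (e n) \<bullet> e i)\<^sup>2 * (1 / lam i) powr (2 * H))"
    by (intro mult_left_mono wiener_moment2_conv_integrand(2) H t) simp
  also have "\<dots> = 8 * H\<^sup>2 * (\<Phi> (e n) \<bullet> e i)\<^sup>2 * (lam i powr \<gamma> * (1 / lam i) powr (2 * H))"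
    by (simp add: mult_ac)
  also have "\<dots> \<le> 8 * H\<^sup>2 * (\<Phi> (e n) \<bullet> e i)\<^sup>2
      * (lam 0 powr (\<gamma> - (2 * H + \<beta> - 1)) * lam i powr (2 * H + \<beta> - 1 - 2 * H))"
    by (intro mult_left_mono powr_inverse_le lam_pos lam_ge_lam0 \<gamma>) simp
  finally show "lam i powr \<gamma> * wiener_moment2 H (\<lambda>r. conv_integrand e lam \<Phi> t r (e n) \<bullet> e i) 0 t
      \<le> 8 * H\<^sup>2 * lam 0 powr (\<gamma> - (2 * H + \<beta> - 1)) * (lam i powr (\<beta> - 1) * (\<Phi> (e n) \<bullet> e i)\<^sup>2)"
    by (simp add: mult_ac)
qed simp

lemma stoch_moment2_conv_diff_le:
  assumes H: "1/2 < H" "H \<le> 1" and \<beta>: "\<beta> \<le> 1" and \<delta>: "0 \<le> \<delta>" "\<delta> \<le> 2 * H + \<beta> - 1"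
    and st: "0 \<le> s" "s < t"
  shows "stoch_moment2 H e lam \<delta> (conv_diff_integrand e lam \<Phi> s t) 0 t
    \<le> ennreal (8 * H\<^sup>2 * (t - s) powr (2 * H + \<beta> - 1 - \<delta>)) * hs_norm2 e (frac_pow e lam ((\<beta> - 1) / 2) \<circ> \<Phi>)"
proof (rule stoch_moment2_le_hs_norm2[OF \<beta>])
  fix n i
  have "lam i powr \<delta> * wiener_moment2 H (\<lambda>r. conv_diff_integrand e lam \<Phi> s t r (e n) \<bullet> e i) 0 t
      \<le> lam i powr \<delta> * (8 * H\<^sup>2 * (\<Phi> (e n) \<bullet> e i)\<^sup>2 * (min (t - s) (1 / lam i)) powr (2 * H))"
    by (intro mult_left_mono wiener_moment2_conv_diff_integrand H st) simp
  also have "\<dots> = 8 * H\<^sup>2 * (\<Phi> (e n) \<bullet> e i)\<^sup>2 * (lam i powr \<delta> * (min (t - s) (1 / lam i)) powr (2 * H))"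
    by (simp add: mult_ac)
  also have "\<dots> \<le> 8 * H\<^sup>2 * (\<Phi> (e n) \<bullet> e i)\<^sup>2
      * ((t - s) powr (2 * H + \<beta> - 1 - \<delta>) * lam i powr (2 * H + \<beta> - 1 - 2 * H))"
    using \<beta> \<delta> st by (intro mult_left_mono powr_min_le lam_pos) auto
  finally show "lam i powr \<delta> * wiener_moment2 H (\<lambda>r. conv_diff_integrand e lam \<Phi> s t r (e n) \<bullet> e i) 0 t
      \<le> 8 * H\<^sup>2 * (t - s) powr (2 * H + \<beta> - 1 - \<delta>) * (lam i powr (\<beta> - 1) * (\<Phi> (e n) \<bullet> e i)\<^sup>2)"
    by (simp add: mult_ac)
qed simp

lemma stoch_well_defined_conv:
  assumes H: "1/2 < H" "H \<le> 1" and \<beta>: "1 - 2 * H \<le> \<beta>" "\<beta> \<le> 1" and t: "0 \<le> t"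
    and hs: "hs_norm2 e (frac_pow e lam ((\<beta> - 1) / 2) \<circ> \<Phi>) < \<infinity>"
  shows "stoch_well_defined H e lam (conv_integrand e lam \<Phi> t) 0 t"
proof -
  have "stoch_moment2 H e lam 0 (conv_integrand e lam \<Phi> t) 0 t
      \<le> ennreal (8 * H\<^sup>2 * lam 0 powr (0 - (2 * H + \<beta> - 1))) * hs_norm2 e (frac_pow e lam ((\<beta> - 1) / 2) \<circ> \<Phi>)"
    using \<beta> by (intro stoch_moment2_conv_le H t) auto
  also have "\<dots> < \<infinity>"
    using hs by (simp add: ennreal_mult_less_top)
  finally show ?thesis
    unfolding stoch_well_defined_def using wiener_moment2_conv_integrand(1)[OF H t] by blast
qed

end

theorem mainTheorem3:
  fixes H :: real
  assumes "1/2 < H" and "H < 1"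
  shows "\<exists>c>0. \<forall>(e :: nat \<Rightarrow> 'a::{real_inner, complete_space}) lam \<Phi> \<beta> T.
     orthonormal_basis e \<and> admissible_spectrum lam \<and> linear \<Phi> \<and>
     1 - 2 * H < \<beta> \<and> \<beta> \<le> 1 \<and> 0 < T \<and>
     hs_norm2 e (frac_pow e lam ((\<beta> - 1) / 2) \<circ> \<Phi>) < \<infinity>
     \<longrightarrow>
       (\<forall>t\<in>{0..T}. stoch_well_defined H e lam (conv_integrand e lam \<Phi> t) 0 t) \<and>
       (\<forall>t\<in>{0..T}. stoch_moment2 H e lam (2 * H + \<beta> - 1) (conv_integrand e lam \<Phi> t) 0 t
            \<le> ennreal (c\<^sup>2) * hs_norm2 e (frac_pow e lam ((\<beta> - 1) / 2) \<circ> \<Phi>)) \<and>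
       (\<forall>s t \<delta>. 0 \<le> s \<and> s < t \<and> t \<le> T \<and> 0 \<le> \<delta> \<and> \<delta> \<le> 2 * H + \<beta> - 1 \<longrightarrow>
          stoch_moment2 H e lam \<delta> (conv_diff_integrand e lam \<Phi> s t) 0 t
            \<le> ennreal (c\<^sup>2 * (t - s) powr (2 * H + \<beta> - 1 - \<delta>))
               * hs_norm2 e (frac_pow e lam ((\<beta> - 1) / 2) \<circ> \<Phi>))"
proof -
  have H: "1/2 < H" "H \<le> 1" using assms by auto
  define c where "c = sqrt 8 * H"
  have c: "0 < c" "c\<^sup>2 = 8 * H\<^sup>2" using H by (auto simp: c_def power_mult_distrib)
  show ?thesis
  proof (intro exI[of _ c] conjI c(1) allI impI)
    fix e :: "nat \<Rightarrow> 'a" and lam :: "nat \<Rightarrow> real" and \<Phi> :: "'a \<Rightarrow> 'a" and \<beta> T :: real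
    assume "orthonormal_basis e \<and> admissible_spectrum lam \<and> linear \<Phi> \<and> 1 - 2 * H < \<beta> \<and> \<beta> \<le> 1 \<and>
      0 < T \<and> hs_norm2 e (frac_pow e lam ((\<beta> - 1) / 2) \<circ> \<Phi>) < \<infinity>"
    then have "spectral_basis e lam" and \<beta>: "1 - 2 * H \<le> \<beta>" "\<beta> \<le> 1"
      and hs: "hs_norm2 e (frac_pow e lam ((\<beta> - 1) / 2) \<circ> \<Phi>) < \<infinity>"
      by (auto simp: spectral_basis_def)
    then interpret spectral_basis e lam by simp
    show "\<forall>t\<in>{0..T}. stoch_well_defined H e lam (conv_integrand e lam \<Phi> t) 0 t"
      using stoch_well_defined_conv[OF H \<beta> _ hs] by simp
    show "\<forall>t\<in>{0..T}. stoch_moment2 H e lam (2 * H + \<beta> - 1) (conv_integrand e lam \<Phi> t) 0 t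
        \<le> ennreal (c\<^sup>2) * hs_norm2 e (frac_pow e lam ((\<beta> - 1) / 2) \<circ> \<Phi>)"
      using stoch_moment2_conv_le[OF H \<beta>(2) order_refl] lam_pos[of 0] by (simp add: c)
    fix s t \<delta> :: real
    assume "0 \<le> s \<and> s < t \<and> t \<le> T \<and> 0 \<le> \<delta> \<and> \<delta> \<le> 2 * H + \<beta> - 1"
    then show "stoch_moment2 H e lam \<delta> (conv_diff_integrand e lam \<Phi> s t) 0 t
        \<le> ennreal (c\<^sup>2 * (t - s) powr (2 * H + \<beta> - 1 - \<delta>)) * hs_norm2 e (frac_pow e lam ((\<beta> - 1) / 2) \<circ> \<Phi>)"
      using stoch_moment2_conv_diff_le[OF H \<beta>(2)] by (simp add: c)
  qed
qed

end
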